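(* Let $C_1$ and $C_2$ be constant-time two-sided error PACAs. Then there are constant-time two-sided error PACAs $C_\cup$ and $C_\cap$ such that $L(C_\cup)=L(C_1)\cup L(C_2)$ and $L(C_\cap)=L(C_1)\cap L(C_2)$.
   Context: PACA: a bounded one-dimensional CA with state set $Q$, input alphabet $\Sigma\subseteq Q$, accepting states $A\subseteq Q$, boundary symbol $\$$ and two local transition functions $\delta_0,\delta_1$; at each step every cell independently tosses a fair coin $c$ and updates by $\delta_c$ applied to its left neighbor, itself and its right neighbor ($\$$ beyond borders). A computation on input $x\in\Sigma^n$ is accepting if at some step all cells are simultaneously in $A$. Time complexity $T$: every accepting computation on inputs of length $n$ first reaches $A^n$ at a step $<T(n)$; constant-time means $T$ is bounded by a constant. A two-sided error PACA $C$ for $L$ accepts every $x\in L$ with probability $\ge2/3$ and every $x\notin L$ with probability $\le1/3$; $L(C)=L$. *)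

theory Defs
  imports Complex_Main
begin

text \<open>Probabilistic cellular automata (PACA). States are natural numbers drawn from a
finite state set; the boundary symbol is represented by None.\<close>

record paca =
  states :: "nat set"
  inputs :: "nat set"
  accepting :: "nat set"
  delta0 :: "nat option \<Rightarrow> nat \<Rightarrow> nat option \<Rightarrow> nat"
  delta1 :: "nat option \<Rightarrow> nat \<Rightarrow> nat option \<Rightarrow> nat"

definition wf_paca :: "paca \<Rightarrow> bool" where
  "wf_paca C \<longleftrightarrow> finite (states C) \<and> inputs C \<subseteq> states C \<and> accepting C \<subseteq> states C \<and>
     (\<forall>l c r. set_option l \<subseteq> states C \<longrightarrow> c \<in> states C \<longrightarrow> set_option r \<subseteq> states C \<longrightarrow>
        delta0 C l c r \<in> states C \<and> delta1 C l c r \<in> states C)"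

definition step :: "paca \<Rightarrow> bool list \<Rightarrow> nat list \<Rightarrow> nat list" where
  "step C cs w = map (\<lambda>i. (if cs ! i then delta1 C else delta0 C)
       (if i = 0 then None else Some (w ! (i - 1)))
       (w ! i)
       (if i + 1 < length w then Some (w ! (i + 1)) else None)) [0..<length w]"

fun run :: "paca \<Rightarrow> nat list \<Rightarrow> bool list list \<Rightarrow> nat list" where
  "run C w [] = w"
| "run C w (c # cs) = run C (step C c w) cs"

definition acc_at :: "paca \<Rightarrow> nat list \<Rightarrow> bool list list \<Rightarrow> nat \<Rightarrow> bool" where
  "acc_at C x coins k \<longleftrightarrow> set (run C x (take k coins)) \<subseteq> accepting C"

definition coin_seqs :: "nat \<Rightarrow> nat \<Rightarrow> bool list list set" where
  "coin_seqs n t = {cs. length cs = t \<and> (\<forall>c\<in>set cs. length c = n)}"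

definition acc_prob_within :: "paca \<Rightarrow> nat list \<Rightarrow> nat \<Rightarrow> real" where
  "acc_prob_within C x t =
     real (card {cs \<in> coin_seqs (length x) t. \<exists>k\<le>t. acc_at C x cs k}) / 2 ^ (length x * t)"

text \<open>Acceptance probability: probability of the increasing union of the events
 "accepted within t steps".\<close>
definition acc_prob :: "paca \<Rightarrow> nat list \<Rightarrow> real" where
  "acc_prob C x = (SUP t. acc_prob_within C x t)"

definition input_words :: "paca \<Rightarrow> nat list set" where
  "input_words C = {x. set x \<subseteq> inputs C}"

definition constant_time :: "paca \<Rightarrow> bool" where
  "constant_time C \<longleftrightarrow> (\<exists>T::nat. \<forall>x \<in> input_words C. \<forall>cs k.
      (\<forall>c\<in>set cs. length c = length x) \<longrightarrow> k \<le> length cs \<longrightarrow> acc_at C x cs k \<longrightarrow>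
      (\<exists>j<T. j \<le> k \<and> acc_at C x cs j))"

definition two_sided :: "paca \<Rightarrow> bool" where
  "two_sided C \<longleftrightarrow> (\<forall>x \<in> input_words C. acc_prob C x \<ge> 2/3 \<or> acc_prob C x \<le> 1/3)"

definition lang :: "paca \<Rightarrow> nat list set" where
  "lang C = {x \<in> input_words C. acc_prob C x \<ge> 2/3}"

end

(* Amplify, then combine.  Taking the majority vote of seven independent runs of a constant-time
   PACA pushes its acceptance probability to at least 1808/2187 on its language and to at most
   379/2187 outside it; with such a gap, the union 1 - (1 - a) (1 - b) and the intersection a b
   of two independent amplified acceptors again have error at most 1/3.  A single PACA performs
   all fourteen runs one after another, T steps each, every cell recording in its state whether it
   was accepting after each step.  A final phase of constant length then spends one step on every
   way of choosing four runs of each automaton together with their acceptance times: a run accepts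
   at a time iff all cells accepted then, so each such choice is checked by every cell on its own
   recorded bits, and the simulator accepts iff the combined majority event holds. *)

theory Submission
  imports Defs "HOL-Library.Countable"
begin

section \<open>Probabilities over coin vectors\<close>

definition coin_prob :: "nat \<Rightarrow> nat \<Rightarrow> (bool list list \<Rightarrow> bool) \<Rightarrow> real" where
  "coin_prob n t E = real (card {cs \<in> coin_seqs n t. E cs}) / 2 ^ (n * t)"

lemma coin_seqs_eq_lists: "coin_seqs n t = {cs. set cs \<subseteq> {c. length c = n} \<and> length cs = t}"
  unfolding coin_seqs_def by auto

lemma finite_bool_lists_length: "finite {c :: bool list. length c = n}"
  using finite_lists_length_eq[of "UNIV :: bool set" n] by simp

lemma card_bool_lists_length: "card {c :: bool list. length c = n} = 2 ^ n"
  using card_lists_length_eq[of "UNIV :: bool set" n] by simp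

lemma finite_coin_seqs: "finite (coin_seqs n t)"
  unfolding coin_seqs_eq_lists by (rule finite_lists_length_eq) (rule finite_bool_lists_length)

lemma card_coin_seqs: "card (coin_seqs n t) = 2 ^ (n * t)"
  unfolding coin_seqs_eq_lists
  by (simp add: card_lists_length_eq finite_bool_lists_length card_bool_lists_length power_mult)

lemma coin_prob_True: "coin_prob n t (\<lambda>_. True) = 1"
  unfolding coin_prob_def by (simp add: card_coin_seqs)

lemma coin_prob_False: "coin_prob n t (\<lambda>_. False) = 0"
  unfolding coin_prob_def by simp

lemma coin_prob_cong:
  "(\<And>cs. cs \<in> coin_seqs n t \<Longrightarrow> A cs = B cs) \<Longrightarrow> coin_prob n t A = coin_prob n t B"
  unfolding coin_prob_def by (metis (mono_tags, lifting) Collect_cong)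

lemma coin_prob_mono:
  "(\<And>cs. cs \<in> coin_seqs n t \<Longrightarrow> A cs \<Longrightarrow> B cs) \<Longrightarrow> coin_prob n t A \<le> coin_prob n t B"
  unfolding coin_prob_def
  by (intro divide_right_mono) (auto intro!: card_mono finite_subset[OF _ finite_coin_seqs])

lemma coin_prob_nonneg: "0 \<le> coin_prob n t E"
  by (simp add: coin_prob_def)

lemma coin_prob_le_1: "coin_prob n t E \<le> 1"
  using coin_prob_mono[of n t E "\<lambda>_. True"] by (simp add: coin_prob_True)

lemma coin_prob_disj:
  assumes "\<And>cs. \<not> (A cs \<and> B cs)"
  shows "coin_prob n t (\<lambda>cs. A cs \<or> B cs) = coin_prob n t A + coin_prob n t B"
proof -
  have "{cs \<in> coin_seqs n t. A cs \<or> B cs} = {cs \<in> coin_seqs n t. A cs} \<union> {cs \<in> coin_seqs n t. B cs}"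
    by auto
  moreover have "card ({cs \<in> coin_seqs n t. A cs} \<union> {cs \<in> coin_seqs n t. B cs}) =
      card {cs \<in> coin_seqs n t. A cs} + card {cs \<in> coin_seqs n t. B cs}"
    by (rule card_Un_disjoint) (use assms finite_coin_seqs in auto)
  ultimately show ?thesis
    unfolding coin_prob_def by (simp add: add_divide_distrib)
qed

lemma coin_prob_not: "coin_prob n t (\<lambda>cs. \<not> A cs) = 1 - coin_prob n t A"
  using coin_prob_disj[of A "\<lambda>cs. \<not> A cs" n t] by (simp add: coin_prob_True)

lemma coin_prob_append:
  "coin_prob n (a + b) (\<lambda>cs. A (take a cs) \<and> B (drop a cs)) = coin_prob n a A * coin_prob n b B"
proof -
  let ?S = "{u \<in> coin_seqs n a. A u} \<times> {v \<in> coin_seqs n b. B v}"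
  let ?E = "{cs \<in> coin_seqs n (a + b). A (take a cs) \<and> B (drop a cs)}"
  have inj: "inj_on (\<lambda>(u, v). u @ v) ?S"
    by (auto simp: inj_on_def coin_seqs_def)
  have "(\<lambda>(u, v). u @ v) ` ?S = ?E"
  proof (intro equalityI subsetI)
    fix cs assume "cs \<in> ?E"
    then have "(take a cs, drop a cs) \<in> ?S"
      by (auto simp: coin_seqs_def dest: in_set_takeD in_set_dropD)
    then show "cs \<in> (\<lambda>(u, v). u @ v) ` ?S"
      by (metis (no_types, lifting) append_take_drop_id case_prod_conv image_eqI)
  qed (auto simp: coin_seqs_def)
  then have "card ?E = card {u \<in> coin_seqs n a. A u} * card {v \<in> coin_seqs n b. B v}"
    using card_image[OF inj] by (simp add: card_cartesian_product)
  then show ?thesis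
    unfolding coin_prob_def by (simp add: power_add distrib_left)
qed

lemma coin_prob_take: "coin_prob n (a + b) (\<lambda>cs. A (take a cs)) = coin_prob n a A"
  using coin_prob_append[of n a b A "\<lambda>_. True"] by (simp add: coin_prob_True)

lemma coin_prob_independent:
  assumes "\<And>cs. A (take a cs) = A cs" and "\<And>cs. B (take b cs) = B cs"
  shows "coin_prob n (a + b + l) (\<lambda>cs. A cs \<and> B (drop a cs)) = coin_prob n a A * coin_prob n b B"
proof -
  have "coin_prob n (a + b + l) (\<lambda>cs. A cs \<and> B (drop a cs)) =
      coin_prob n (a + b + l) (\<lambda>cs. (\<lambda>cs. A (take a cs) \<and> B (drop a cs)) (take (a + b) cs))"
    by (rule coin_prob_cong) (metis assms drop_take take_take min.absorb1 le_add1 add_diff_cancel_left')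
  also have "\<dots> = coin_prob n (a + b) (\<lambda>cs. A (take a cs) \<and> B (drop a cs))"
    by (rule coin_prob_take)
  also have "\<dots> = coin_prob n a A * coin_prob n b B"
    by (rule coin_prob_append)
  finally show ?thesis .
qed

lemma coin_prob_independent_disj:
  assumes "\<And>cs. A (take a cs) = A cs" and "\<And>cs. B (take b cs) = B cs"
  shows "coin_prob n (a + b + l) (\<lambda>cs. A cs \<or> B (drop a cs)) =
    1 - (1 - coin_prob n a A) * (1 - coin_prob n b B)"
  using coin_prob_not[of n "a + b + l" "\<lambda>cs. \<not> A cs \<and> \<not> B (drop a cs)"]
    coin_prob_independent[of "\<lambda>cs. \<not> A cs" a "\<lambda>cs. \<not> B cs" b n l] assms
  by (simp add: coin_prob_not)

section \<open>Acceptance within a time bound\<close>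

lemma acc_at_take: "j \<le> l \<Longrightarrow> acc_at C x (take l cs) j = acc_at C x cs j"
  unfolding acc_at_def by (simp add: min_def)

definition time_bound :: "paca \<Rightarrow> nat \<Rightarrow> bool" where
  "time_bound C T \<longleftrightarrow> (\<forall>x \<in> input_words C. \<forall>cs k.
      (\<forall>c\<in>set cs. length c = length x) \<longrightarrow> k \<le> length cs \<longrightarrow> acc_at C x cs k \<longrightarrow>
      (\<exists>j<T. j \<le> k \<and> acc_at C x cs j))"

lemma constant_time_iff_time_bound: "constant_time C \<longleftrightarrow> (\<exists>T. time_bound C T)"
  unfolding constant_time_def time_bound_def ..

lemma time_bound_mono: "time_bound C T \<Longrightarrow> T \<le> T' \<Longrightarrow> time_bound C T'"
  unfolding time_bound_def by (meson order_less_le_trans)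

definition accepts_before :: "paca \<Rightarrow> nat list \<Rightarrow> nat \<Rightarrow> bool list list \<Rightarrow> bool" where
  "accepts_before C x T cs \<longleftrightarrow> (\<exists>j<T. acc_at C x cs j)"

lemma accepts_before_take: "T \<le> l \<Longrightarrow> accepts_before C x T (take l cs) = accepts_before C x T cs"
  unfolding accepts_before_def by (auto simp: acc_at_take)

lemma acc_prob_within_eq_coin_prob:
  "acc_prob_within C x t = coin_prob (length x) t (\<lambda>cs. \<exists>k\<le>t. acc_at C x cs k)"
  unfolding acc_prob_within_def coin_prob_def ..

lemma acc_prob_within_less:
  assumes "t < T"
  shows "acc_prob_within C x t \<le> coin_prob (length x) T (accepts_before C x T)"
proof -
  have "acc_prob_within C x t =
      coin_prob (length x) (t + (T - t)) (\<lambda>cs. (\<lambda>cs. \<exists>k\<le>t. acc_at C x cs k) (take t cs))"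
    unfolding acc_prob_within_eq_coin_prob by (rule coin_prob_take[symmetric])
  also have "\<dots> \<le> coin_prob (length x) T (accepts_before C x T)"
    using assms
    by (simp, intro coin_prob_mono) (auto simp: accepts_before_def acc_at_take; meson le_less_trans)
  finally show ?thesis .
qed

lemma acc_prob_within_bounded:
  assumes "time_bound C T" and "x \<in> input_words C" and "T \<le> t"
  shows "acc_prob_within C x t = coin_prob (length x) T (accepts_before C x T)"
proof -
  have "acc_prob_within C x t = coin_prob (length x) t (\<lambda>cs. accepts_before C x T (take T cs))"
    unfolding acc_prob_within_eq_coin_prob
  proof (rule coin_prob_cong)
    fix cs assume cs: "cs \<in> coin_seqs (length x) t"
    show "(\<exists>k\<le>t. acc_at C x cs k) = accepts_before C x T (take T cs)"
    proof
      assume "\<exists>k\<le>t. acc_at C x cs k"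
      then obtain k where "k \<le> length cs" "acc_at C x cs k"
        using cs by (auto simp: coin_seqs_def)
      then obtain j where "j < T" "acc_at C x cs j"
        using assms(1,2) cs unfolding time_bound_def coin_seqs_def by blast
      then show "accepts_before C x T (take T cs)"
        by (auto simp: accepts_before_def acc_at_take)
    next
      assume "accepts_before C x T (take T cs)"
      then obtain j where "j < T" "acc_at C x cs j"
        by (auto simp: accepts_before_def acc_at_take)
      then show "\<exists>k\<le>t. acc_at C x cs k"
        using assms(3) by (meson less_imp_le order_trans)
    qed
  qed
  also have "\<dots> = coin_prob (length x) (T + (t - T)) (\<lambda>cs. accepts_before C x T (take T cs))"
    using assms(3) by simp
  also have "\<dots> = coin_prob (length x) T (accepts_before C x T)"
    by (rule coin_prob_take)
  finally show ?thesis .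
qed

lemma acc_prob_eq_coin_prob:
  assumes "time_bound C T" and "x \<in> input_words C"
  shows "acc_prob C x = coin_prob (length x) T (accepts_before C x T)"
proof -
  have "acc_prob_within C x t \<le> coin_prob (length x) T (accepts_before C x T)" for t
    by (cases "T \<le> t") (simp_all add: acc_prob_within_bounded[OF assms] acc_prob_within_less)
  then show ?thesis
    unfolding acc_prob_def using acc_prob_within_bounded[OF assms order_refl]
    by (intro cSup_eq_maximum) (metis rangeI, blast)
qed

lemma acc_prob_Nil: "acc_prob C [] = 1"
proof -
  have "coin_prob 0 t (\<lambda>cs. \<exists>k\<le>t. acc_at C [] cs k) = coin_prob 0 t (\<lambda>_. True)" for t
    by (rule coin_prob_cong) (auto simp: acc_at_def)
  then show ?thesis
    unfolding acc_prob_def acc_prob_within_eq_coin_prob by (simp add: coin_prob_True)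
qed

section \<open>Majority amplification\<close>

fun accept_count :: "paca \<Rightarrow> nat list \<Rightarrow> nat \<Rightarrow> nat \<Rightarrow> bool list list \<Rightarrow> nat" where
  "accept_count C x T 0 cs = 0"
| "accept_count C x T (Suc m) cs =
    (if accepts_before C x T cs then 1 else 0) + accept_count C x T m (drop T cs)"

lemma accept_count_take:
  "m * T \<le> l \<Longrightarrow> accept_count C x T m (take l cs) = accept_count C x T m cs"
proof (induction m arbitrary: l cs)
  case (Suc m)
  then have "T \<le> l" and "m * T \<le> l - T" by simp_all
  moreover have "drop T (take l cs) = take (l - T) (drop T cs)" by (simp add: drop_take)
  ultimately show ?case using Suc.IH by (simp add: accepts_before_take)
qed simp

fun binomial_tail :: "real \<Rightarrow> nat \<Rightarrow> nat \<Rightarrow> real" where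
  "binomial_tail p m 0 = 1"
| "binomial_tail p 0 (Suc k) = 0"
| "binomial_tail p (Suc m) (Suc k) = p * binomial_tail p m k + (1 - p) * binomial_tail p m (Suc k)"

lemma coin_prob_accept_count:
  "coin_prob n (m * T) (\<lambda>cs. k \<le> accept_count C x T m cs) =
    binomial_tail (coin_prob n T (accepts_before C x T)) m k"
proof (induction m arbitrary: k)
  case 0
  then show ?case by (cases k) (simp_all add: coin_prob_True coin_prob_False)
next
  case (Suc m)
  let ?A = "accepts_before C x T" and ?p = "coin_prob n T (accepts_before C x T)"
  show ?case
  proof (cases k)
    case 0
    then show ?thesis by (simp add: coin_prob_True)
  next
    case (Suc k')
    have "coin_prob n (T + m * T) (\<lambda>cs. k \<le> accept_count C x T (Suc m) cs) =
        coin_prob n (T + m * T) (\<lambda>cs. ?A (take T cs) \<and> k' \<le> accept_count C x T m (drop T cs) \<or>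
          \<not> ?A (take T cs) \<and> Suc k' \<le> accept_count C x T m (drop T cs))"
      by (rule coin_prob_cong) (auto simp: Suc accepts_before_take)
    also have "\<dots> = ?p * binomial_tail ?p m k' + (1 - ?p) * binomial_tail ?p m (Suc k')"
      using coin_prob_append[of n T "m * T" ?A "\<lambda>cs. k' \<le> accept_count C x T m cs"]
        coin_prob_append[of n T "m * T" "\<lambda>cs. \<not> ?A cs" "\<lambda>cs. Suc k' \<le> accept_count C x T m cs"]
      by (subst coin_prob_disj) (auto simp: Suc.IH coin_prob_not)
    finally show ?thesis by (simp add: Suc)
  qed
qed

lemma binomial_tail_bounds: "0 \<le> p \<Longrightarrow> p \<le> 1 \<Longrightarrow> 0 \<le> binomial_tail p m k \<and> binomial_tail p m k \<le> 1"
proof (induction p m k rule: binomial_tail.induct)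
  case (3 p m k)
  then have "p * binomial_tail p m k + (1 - p) * binomial_tail p m (Suc k) \<le> p * 1 + (1 - p) * 1"
    by (intro add_mono mult_left_mono) auto
  with 3 show ?case by simp
qed simp_all

lemma binomial_tail_Suc_le: "0 \<le> p \<Longrightarrow> p \<le> 1 \<Longrightarrow> binomial_tail p m (Suc k) \<le> binomial_tail p m k"
proof (induction m arbitrary: k)
  case 0
  then show ?case by (cases k) simp_all
next
  case (Suc m)
  show ?case
  proof (cases k)
    case 0
    then show ?thesis using binomial_tail_bounds[OF Suc.prems, of "Suc m" 1] by simp
  qed (use Suc in \<open>auto intro!: add_mono mult_left_mono\<close>)
qed

lemma binomial_tail_mono:
  assumes "0 \<le> p" "p \<le> p'" "p' \<le> 1"
  shows "binomial_tail p m k \<le> binomial_tail p' m k"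
proof (induction m arbitrary: k)
  case 0
  then show ?case by (cases k) simp_all
next
  case (Suc m)
  show ?case
  proof (cases k)
    case (Suc k')
    let ?b = "binomial_tail p' m"
    have "binomial_tail p (Suc m) k \<le> p * ?b k' + (1 - p) * ?b (Suc k')"
      using Suc.IH assms by (simp add: Suc) (intro add_mono mult_left_mono; simp)
    also have "\<dots> = ?b (Suc k') + p * (?b k' - ?b (Suc k'))"
      by algebra
    also have "\<dots> \<le> ?b (Suc k') + p' * (?b k' - ?b (Suc k'))"
      using binomial_tail_Suc_le[of p' m k'] assms by (intro add_left_mono mult_right_mono) auto
    also have "\<dots> = binomial_tail p' (Suc m) k"
      by (simp add: Suc algebra_simps)
    finally show ?thesis .
  qed simp
qed

definition majority_gap :: "bool \<Rightarrow> real \<Rightarrow> bool" where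
  "majority_gap A p \<longleftrightarrow> 0 \<le> p \<and> p \<le> 1 \<and> (A \<longrightarrow> 1808/2187 \<le> p) \<and> (\<not> A \<longrightarrow> p \<le> 379/2187)"

definition decides :: "bool \<Rightarrow> real \<Rightarrow> bool" where
  "decides A p \<longleftrightarrow> (A \<longrightarrow> 2/3 \<le> p) \<and> (\<not> A \<longrightarrow> p \<le> 1/3)"

lemma majority_gap_binomial_tail:
  assumes "0 \<le> p" "p \<le> 1" "2/3 \<le> p \<or> p \<le> 1/3"
  shows "majority_gap (2/3 \<le> p) (binomial_tail p 7 4)"
proof -
  have "binomial_tail (2/3) 7 4 = 1808/2187" and "binomial_tail (1/3) 7 4 = 379/2187"
    by (simp_all add: numeral_eq_Suc)
  moreover have "binomial_tail (2/3) 7 4 \<le> binomial_tail p 7 4" if "2/3 \<le> p"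
    using that assms by (intro binomial_tail_mono) auto
  moreover have "binomial_tail p 7 4 \<le> binomial_tail (1/3) 7 4" if "p \<le> 1/3"
    using that assms by (intro binomial_tail_mono) auto
  ultimately show ?thesis
    unfolding majority_gap_def using assms binomial_tail_bounds[OF assms(1,2)] by auto
qed

lemma majority_gap_union:
  assumes "majority_gap A a" "majority_gap B b"
  shows "decides (A \<or> B) (1 - (1 - a) * (1 - b))"
proof -
  have "(1 - a) * (1 - b) \<le> 379/2187" if "A \<or> B"
    using that
  proof
    assume A
    then have "(1 - a) * (1 - b) \<le> (379/2187) * 1"
      using assms unfolding majority_gap_def by (intro mult_mono) auto
    then show ?thesis by simp
  next
    assume B
    then have "(1 - a) * (1 - b) \<le> 1 * (379/2187)"
      using assms unfolding majority_gap_def by (intro mult_mono) auto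
    then show ?thesis by simp
  qed
  moreover have "(1808/2187) * (1808/2187) \<le> (1 - a) * (1 - b)" if "\<not> (A \<or> B)"
    using that assms unfolding majority_gap_def by (intro mult_mono) auto
  ultimately show ?thesis
    unfolding decides_def by auto
qed

lemma majority_gap_inter:
  assumes "majority_gap A a" "majority_gap B b"
  shows "decides (A \<and> B) (a * b)"
proof -
  have "(1808/2187) * (1808/2187) \<le> a * b" if "A \<and> B"
    using that assms unfolding majority_gap_def by (intro mult_mono) auto
  moreover have "a * b \<le> 379/2187" if "\<not> (A \<and> B)"
  proof (cases A)
    case True
    then have "a * b \<le> 1 * (379/2187)"
      using that assms unfolding majority_gap_def by (intro mult_mono) auto
    then show ?thesis by simp
  next
    case False
    then have "a * b \<le> (379/2187) * 1"
      using assms unfolding majority_gap_def by (intro mult_mono) auto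
    then show ?thesis by simp
  qed
  ultimately show ?thesis
    unfolding decides_def by auto
qed

lemma two_sided_lang_eqI:
  assumes "\<And>x. x \<in> input_words C \<Longrightarrow> decides (P x) (acc_prob C x)"
  shows "two_sided C" and "lang C = {x \<in> input_words C. P x}"
  using assms unfolding two_sided_def lang_def decides_def by force+

section \<open>Running several PACAs in sequence\<close>

lemma length_step [simp]: "length (step C c w) = length w"
  by (simp add: step_def)

lemma length_run [simp]: "length (run C w cs) = length w"
  by (induction cs arbitrary: w) simp_all

lemma run_snoc: "run C w (cs @ [c]) = step C c (run C w cs)"
  by (induction cs arbitrary: w) simp_all

lemma step_states:
  assumes "wf_paca C" and "set w \<subseteq> states C"
  shows "set (step C c w) \<subseteq> states C"
  using assms unfolding step_def wf_paca_def by (auto simp: subset_iff)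

lemma acc_at_iff_nth: "acc_at C x cs j \<longleftrightarrow> (\<forall>i<length x. run C x (take j cs) ! i \<in> accepting C)"
  unfolding acc_at_def by (auto simp: set_conv_nth)

lemma run_states: "wf_paca C \<Longrightarrow> set w \<subseteq> states C \<Longrightarrow> set (run C w cs) \<subseteq> states C"
  by (induction cs arbitrary: w) (simp_all add: step_states)

text \<open>A cell \<open>(t, a, z, bs)\<close> of the simulator holds a clock \<open>t\<close>, its input letter \<open>a\<close>, the
  state \<open>z\<close> of the currently simulated automaton, and the recorded bits \<open>bs\<close>: bit \<open>r * T + j\<close>
  tells whether the cell was accepting after \<open>j\<close> steps of round \<open>r\<close>.\<close>

type_synonym cell = "nat \<times> nat \<times> nat \<times> bool list"

text \<open>Numbers up to \<open>M\<close> are input letters, read as initial cells; larger numbers encode cells.\<close>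

definition encode_cell :: "nat \<Rightarrow> cell \<Rightarrow> nat" where
  "encode_cell M v = to_nat v + M + 1"

definition decode_cell :: "nat \<Rightarrow> nat \<Rightarrow> cell" where
  "decode_cell M s = (if s \<le> M then (0, s, s, []) else from_nat (s - M - 1))"

lemma decode_encode_cell [simp]: "decode_cell M (encode_cell M v) = v"
  by (simp add: encode_cell_def decode_cell_def)

definition cell_state :: "cell \<Rightarrow> nat" where
  "cell_state v = fst (snd (snd v))"

text \<open>Round \<open>r < length Cs\<close> runs \<open>Cs ! r\<close> for \<open>T\<close> steps, starting from the input; then the clock
  passes through a final phase of length \<open>length Ws\<close>, and the cell is accepting at time
  \<open>length Cs * T + d\<close> iff the bits listed in \<open>Ws ! d\<close> are set.  The fallbacks to \<open>a\<close> and the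
  truncation of \<open>bs\<close> only keep the state set finite; they never apply in an actual run.\<close>

definition sim_trans :: "paca list \<Rightarrow> nat \<Rightarrow> (nat \<times> nat) list list \<Rightarrow> nat set \<Rightarrow>
    bool \<Rightarrow> nat option \<Rightarrow> cell \<Rightarrow> nat option \<Rightarrow> cell" where
  "sim_trans Cs T Ws Q c l v r = (case v of (t, a, z, bs) \<Rightarrow>
     if t < length Cs * T then
       (let C = Cs ! (t div T); z' = (if c then delta1 C else delta0 C) l z r in
        (Suc t, a, if Suc (t mod T) = T then a else if z' \<in> Q then z' else a,
         take (length Cs * T) (bs @ [z \<in> accepting C])))
     else (if t < length Cs * T + length Ws then Suc t else t, a, z, bs))"

definition sim_accepting :: "paca list \<Rightarrow> nat \<Rightarrow> (nat \<times> nat) list list \<Rightarrow> cell \<Rightarrow> bool" where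
  "sim_accepting Cs T Ws v = (case v of (t, a, z, bs) \<Rightarrow>
     length Cs * T \<le> t \<and> t < length Cs * T + length Ws \<and>
     (\<forall>(r, j) \<in> set (Ws ! (t - length Cs * T)). bs ! (r * T + j)))"

definition sim_cells :: "paca list \<Rightarrow> nat \<Rightarrow> (nat \<times> nat) list list \<Rightarrow> nat set \<Rightarrow> nat set \<Rightarrow> cell set" where
  "sim_cells Cs T Ws I Q = {(t, a, z, bs). t \<le> length Cs * T + length Ws \<and> a \<in> I \<and> z \<in> Q \<and>
     length bs \<le> length Cs * T}"

definition sim_delta :: "paca list \<Rightarrow> nat \<Rightarrow> (nat \<times> nat) list list \<Rightarrow> nat set \<Rightarrow> nat \<Rightarrow>
    bool \<Rightarrow> nat option \<Rightarrow> nat \<Rightarrow> nat option \<Rightarrow> nat" where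
  "sim_delta Cs T Ws Q M c l s r = encode_cell M (sim_trans Cs T Ws Q c
     (map_option (cell_state \<circ> decode_cell M) l) (decode_cell M s)
     (map_option (cell_state \<circ> decode_cell M) r))"

definition sim_paca ::
    "paca list \<Rightarrow> nat \<Rightarrow> (nat \<times> nat) list list \<Rightarrow> nat set \<Rightarrow> nat set \<Rightarrow> nat \<Rightarrow> paca" where
  "sim_paca Cs T Ws I Q M =
    \<lparr>states = I \<union> encode_cell M ` sim_cells Cs T Ws I Q, inputs = I,
     accepting = {s \<in> I \<union> encode_cell M ` sim_cells Cs T Ws I Q.
       sim_accepting Cs T Ws (decode_cell M s)},
     delta0 = sim_delta Cs T Ws Q M False, delta1 = sim_delta Cs T Ws Q M True\<rparr>"

definition sim_step ::
    "paca list \<Rightarrow> nat \<Rightarrow> (nat \<times> nat) list list \<Rightarrow> nat set \<Rightarrow> bool list \<Rightarrow> cell list \<Rightarrow> cell list"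
  where
  "sim_step Cs T Ws Q c vs = map (\<lambda>i. sim_trans Cs T Ws Q (c ! i)
      (if i = 0 then None else Some (cell_state (vs ! (i - 1)))) (vs ! i)
      (if i + 1 < length vs then Some (cell_state (vs ! (i + 1))) else None)) [0..<length vs]"

lemma decode_step_sim_paca:
  "length c = length w \<Longrightarrow>
    map (decode_cell M) (step (sim_paca Cs T Ws I Q M) c w) = sim_step Cs T Ws Q c (map (decode_cell M) w)"
  unfolding step_def sim_step_def sim_paca_def
  by (auto simp: sim_delta_def cell_state_def intro!: nth_equalityI)

locale sequential_simulation =
  fixes Cs :: "paca list" and T :: nat and Ws :: "(nat \<times> nat) list list"
    and I Q :: "nat set" and M :: nat
  assumes wf_Cs: "\<And>C. C \<in> set Cs \<Longrightarrow> wf_paca C"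
    and states_Cs: "\<And>C. C \<in> set Cs \<Longrightarrow> I \<subseteq> states C \<and> states C \<subseteq> Q"
    and Q_le_M: "\<And>a. a \<in> Q \<Longrightarrow> a \<le> M"
    and T_pos: "0 < T" and Cs_nonempty: "Cs \<noteq> []"
    and Ws_bounds: "\<And>w r j. w \<in> set Ws \<Longrightarrow> (r, j) \<in> set w \<Longrightarrow> r < length Cs \<and> j < T"
begin

abbreviation "simulator \<equiv> sim_paca Cs T Ws I Q M"
abbreviation "rounds \<equiv> length Cs"
abbreviation "T_end \<equiv> length Cs * T + length Ws"

lemma I_subset_Q: "I \<subseteq> Q"
  using states_Cs Cs_nonempty by (meson last_in_set order_trans)

lemma finite_Q: "finite Q"
  using Q_le_M by (meson finite_atMost finite_subset atMost_iff subsetI)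

lemma states_simulator: "states simulator = I \<union> encode_cell M ` sim_cells Cs T Ws I Q"
  and inputs_simulator: "inputs simulator = I"
  and accepting_simulator: "accepting simulator = {s \<in> states simulator. sim_accepting Cs T Ws (decode_cell M s)}"
  by (simp_all add: sim_paca_def)

lemma decode_cell_mem_sim_cells:
  assumes "s \<in> states simulator"
  shows "decode_cell M s \<in> sim_cells Cs T Ws I Q"
proof -
  consider "s \<in> I" | v where "v \<in> sim_cells Cs T Ws I Q" and "s = encode_cell M v"
    using assms by (auto simp: states_simulator)
  then show ?thesis
  proof cases
    case 1
    then have "s \<le> M" and "s \<in> Q"
      using I_subset_Q Q_le_M by auto
    with 1 show ?thesis
      by (simp add: decode_cell_def sim_cells_def)
  qed simp
qed

lemma sim_trans_mem_sim_cells: "v \<in> sim_cells Cs T Ws I Q \<Longrightarrow> sim_trans Cs T Ws Q c l v r \<in> sim_cells Cs T Ws I Q"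
  using I_subset_Q unfolding sim_cells_def sim_trans_def by (auto simp: Let_def split: prod.splits)

lemma finite_sim_cells: "finite (sim_cells Cs T Ws I Q)"
proof -
  have "sim_cells Cs T Ws I Q \<subseteq> {..T_end} \<times> Q \<times> Q \<times> {bs. set bs \<subseteq> UNIV \<and> length bs \<le> rounds * T}"
    using I_subset_Q unfolding sim_cells_def by auto
  moreover have "finite ({..T_end} \<times> Q \<times> Q \<times> {bs :: bool list. set bs \<subseteq> UNIV \<and> length bs \<le> rounds * T})"
    using finite_Q by (intro finite_cartesian_product finite_lists_length_le) auto
  ultimately show ?thesis by (rule finite_subset)
qed

lemma wf_simulator: "wf_paca simulator"
  unfolding wf_paca_def
proof (intro conjI allI impI)
  show "finite (states simulator)"
    using finite_sim_cells finite_Q I_subset_Q finite_subset by (auto simp: states_simulator)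
  fix l c r assume "c \<in> states simulator"
  then have "sim_trans Cs T Ws Q b l' (decode_cell M c) r' \<in> sim_cells Cs T Ws I Q" for b l' r'
    by (intro sim_trans_mem_sim_cells decode_cell_mem_sim_cells)
  then show "delta0 simulator l c r \<in> states simulator" "delta1 simulator l c r \<in> states simulator"
    by (simp_all add: sim_paca_def sim_delta_def)
qed (auto simp: sim_paca_def)

context
  fixes x :: "nat list" and cs :: "bool list list"
  assumes x_I: "set x \<subseteq> I" and length_cs: "\<And>c. c \<in> set cs \<Longrightarrow> length c = length x"
begin

definition round_config :: "nat \<Rightarrow> nat list" where
  "round_config k = run (Cs ! (k div T)) x (take (k mod T) (drop (k div T * T) cs))"

definition recorded_bits :: "nat \<Rightarrow> nat \<Rightarrow> bool list" where
  "recorded_bits k i = map (\<lambda>l. round_config l ! i \<in> accepting (Cs ! (l div T))) [0..<k]"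

definition expected_cell :: "nat \<Rightarrow> nat \<Rightarrow> cell" where
  "expected_cell k i = (if k < rounds * T then (k, x ! i, round_config k ! i, recorded_bits k i)
     else (min k T_end, x ! i, x ! i, recorded_bits (rounds * T) i))"

lemma length_round_config [simp]: "length (round_config k) = length x"
  by (simp add: round_config_def)

lemma nth_Cs_mem: "k < rounds * T \<Longrightarrow> Cs ! (k div T) \<in> set Cs"
  by (simp add: less_mult_imp_div_less)

lemma round_config_states: "k < rounds * T \<Longrightarrow> set (round_config k) \<subseteq> states (Cs ! (k div T))"
  unfolding round_config_def using nth_Cs_mem wf_Cs states_Cs x_I
  by (meson run_states order_trans)

lemma round_config_round_end: "Suc k mod T = 0 \<Longrightarrow> round_config (Suc k) = x"
  by (simp add: round_config_def)

lemma round_config_Suc: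
  assumes "k < length cs" and "Suc k mod T \<noteq> 0"
  shows "round_config (Suc k) = step (Cs ! (k div T)) (cs ! k) (round_config k)"
proof -
  have "Suc k mod T = Suc (k mod T)" and "Suc k div T = k div T"
    using assms(2) by (simp_all add: mod_Suc div_Suc split: if_splits)
  moreover have "take (Suc (k mod T)) (drop (k div T * T) cs) = take (k mod T) (drop (k div T * T) cs) @ [cs ! k]"
  proof -
    have k: "k div T * T + k mod T = k"
      by (rule div_mult_mod_eq)
    moreover have "k div T * T \<le> length cs"
      using assms(1) k by linarith
    ultimately have nth: "drop (k div T * T) cs ! (k mod T) = cs ! k"
      by simp
    have "k mod T < length cs - k div T * T"
      using assms(1) k by linarith
    then have "k mod T < length (drop (k div T * T) cs)"
      by simp
    then show ?thesis
      by (simp add: take_Suc_conv_app_nth nth)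
  qed
  ultimately show ?thesis
    by (simp add: round_config_def run_snoc)
qed

lemma recorded_bits_Suc:
  "k < rounds * T \<Longrightarrow>
    take (rounds * T) (recorded_bits k i @ [round_config k ! i \<in> accepting (Cs ! (k div T))]) =
    recorded_bits (Suc k) i"
  by (simp add: recorded_bits_def)

lemma step_round_config_mem_Q:
  assumes "k < rounds * T" and "i < length x"
  shows "step (Cs ! (k div T)) c (round_config k) ! i \<in> Q"
proof -
  let ?C = "Cs ! (k div T)"
  have C: "?C \<in> set Cs"
    using assms(1) by (rule nth_Cs_mem)
  then have "set (step ?C c (round_config k)) \<subseteq> states ?C"
    using wf_Cs round_config_states[OF assms(1)] by (intro step_states) auto
  moreover have "step ?C c (round_config k) ! i \<in> set (step ?C c (round_config k))"
    using assms(2) by simp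
  ultimately show ?thesis
    using C states_Cs by blast
qed

lemma sim_trans_expected_cell:
  assumes i: "i < length x" and k: "k < length cs"
  shows "sim_trans Cs T Ws Q (cs ! k ! i)
      (if i = 0 then None else Some (cell_state (expected_cell k (i - 1)))) (expected_cell k i)
      (if i + 1 < length x then Some (cell_state (expected_cell k (i + 1))) else None) =
    expected_cell (Suc k) i"
proof (cases "k < rounds * T")
  case True
  let ?z = "step (Cs ! (k div T)) (cs ! k) (round_config k) ! i"
  have "cell_state (expected_cell k j) = round_config k ! j" for j
    using True by (simp add: expected_cell_def cell_state_def)
  then have trans: "sim_trans Cs T Ws Q (cs ! k ! i)
      (if i = 0 then None else Some (cell_state (expected_cell k (i - 1)))) (expected_cell k i)
      (if i + 1 < length x then Some (cell_state (expected_cell k (i + 1))) else None) =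
    (Suc k, x ! i, if Suc (k mod T) = T then x ! i else if ?z \<in> Q then ?z else x ! i, recorded_bits (Suc k) i)"
    using True i
    by (simp add: expected_cell_def sim_trans_def step_def Let_def recorded_bits_Suc[OF True] del: take_append)
  show ?thesis
  proof (cases "Suc (k mod T) = T")
    case True
    then have "Suc k mod T = 0"
      by (simp add: mod_Suc)
    moreover have "Suc k < rounds * T \<or> Suc k = rounds * T"
      using \<open>k < rounds * T\<close> by linarith
    ultimately show ?thesis
      unfolding trans using \<open>Suc (k mod T) = T\<close>
      by (elim disjE) (simp_all add: expected_cell_def round_config_round_end)
  next
    case False
    then have "Suc k mod T \<noteq> 0"
      by (simp add: mod_Suc)
    moreover have "Suc k < rounds * T"
      using \<open>k < rounds * T\<close> \<open>Suc k mod T \<noteq> 0\<close> by (metis Suc_lessI mod_mult_self2_is_0)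
    moreover have "?z \<in> Q"
      using \<open>k < rounds * T\<close> i by (rule step_round_config_mem_Q)
    ultimately show ?thesis
      unfolding trans using False by (simp add: expected_cell_def round_config_Suc[OF k])
  qed
next
  case False
  then show ?thesis
    unfolding sim_trans_def expected_cell_def by (auto simp: min_def)
qed

lemma run_simulator:
  "k \<le> length cs \<Longrightarrow>
    map (decode_cell M) (run simulator x (take k cs)) = map (expected_cell k) [0..<length x]"
proof (induction k)
  case 0
  have "x ! i \<le> M" if "i < length x" for i
    using that x_I I_subset_Q Q_le_M by (meson nth_mem subsetD)
  moreover have "0 < rounds * T"
    using T_pos Cs_nonempty by simp
  ultimately show ?case
    by (intro nth_equalityI)
      (simp_all add: expected_cell_def round_config_def recorded_bits_def decode_cell_def)
next
  case (Suc k)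
  then have k: "k < length cs" by simp
  have "map (decode_cell M) (run simulator x (take (Suc k) cs)) =
      sim_step Cs T Ws Q (cs ! k) (map (expected_cell k) [0..<length x])"
    using Suc k length_cs by (simp add: take_Suc_conv_app_nth run_snoc decode_step_sim_paca)
  also have "\<dots> = map (expected_cell (Suc k)) [0..<length x]"
  proof (rule nth_equalityI)
    fix i assume "i < length (sim_step Cs T Ws Q (cs ! k) (map (expected_cell k) [0..<length x]))"
    then have i: "i < length x"
      by (simp add: sim_step_def)
    then have "sim_step Cs T Ws Q (cs ! k) (map (expected_cell k) [0..<length x]) ! i =
      sim_trans Cs T Ws Q (cs ! k ! i)
        (if i = 0 then None else Some (cell_state (expected_cell k (i - 1)))) (expected_cell k i)
        (if i + 1 < length x then Some (cell_state (expected_cell k (i + 1))) else None)"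
      by (cases "i = 0") (simp_all add: sim_step_def)
    also have "\<dots> = expected_cell (Suc k) i"
      by (rule sim_trans_expected_cell[OF i k])
    finally show "sim_step Cs T Ws Q (cs ! k) (map (expected_cell k) [0..<length x]) ! i =
        map (expected_cell (Suc k)) [0..<length x] ! i"
      using i by simp
  qed (simp add: sim_step_def)
  finally show ?case .
qed

lemma recorded_bits_nth:
  assumes "r < rounds" and "j < T"
  shows "recorded_bits (rounds * T) i ! (r * T + j) \<longleftrightarrow>
    run (Cs ! r) x (take j (drop (r * T) cs)) ! i \<in> accepting (Cs ! r)"
proof -
  have "r * T + j < Suc r * T"
    using assms by simp
  also have "\<dots> \<le> rounds * T"
    using assms by (intro mult_le_mono1) simp
  moreover have "(r * T + j) div T = r" and "(r * T + j) mod T = j"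
    using assms by simp_all
  ultimately show ?thesis
    by (simp add: recorded_bits_def round_config_def)
qed

lemma sim_accepting_expected_cell:
  "sim_accepting Cs T Ws (expected_cell k i) \<longleftrightarrow> rounds * T \<le> k \<and> k < T_end \<and>
    (\<forall>(r, j)\<in>set (Ws ! (k - rounds * T)). run (Cs ! r) x (take j (drop (r * T) cs)) ! i \<in> accepting (Cs ! r))"
proof (cases "rounds * T \<le> k \<and> k < T_end")
  case True
  then have "Ws ! (k - rounds * T) \<in> set Ws"
    by (intro nth_mem) linarith
  then have "\<forall>(r, j)\<in>set (Ws ! (k - rounds * T)). r < rounds \<and> j < T"
    using Ws_bounds by blast
  then have bits: "recorded_bits (rounds * T) i ! (r * T + j) \<longleftrightarrow>
      run (Cs ! r) x (take j (drop (r * T) cs)) ! i \<in> accepting (Cs ! r)"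
    if "(r, j) \<in> set (Ws ! (k - rounds * T))" for r j
    using that recorded_bits_nth by blast
  have "expected_cell k i = (k, x ! i, x ! i, recorded_bits (rounds * T) i)"
    using True by (simp add: expected_cell_def)
  then show ?thesis
    using True by (auto simp: sim_accepting_def bits)
next
  case False
  then have "\<not> sim_accepting Cs T Ws (expected_cell k i)"
    by (cases "k < rounds * T") (simp_all add: expected_cell_def sim_accepting_def min_def)
  with False show ?thesis
    by blast
qed

lemma acc_at_simulator:
  assumes "x \<noteq> []" and "k \<le> length cs"
  shows "acc_at simulator x cs k \<longleftrightarrow> rounds * T \<le> k \<and> k < T_end \<and>
    (\<forall>(r, j)\<in>set (Ws ! (k - rounds * T)). acc_at (Cs ! r) x (drop (r * T) cs) j)"
proof -
  have "set (run simulator x (take k cs)) \<subseteq> states simulator"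
    using x_I by (intro run_states wf_simulator) (auto simp: states_simulator)
  then have "acc_at simulator x cs k \<longleftrightarrow>
      (\<forall>v\<in>set (map (decode_cell M) (run simulator x (take k cs))). sim_accepting Cs T Ws v)"
    unfolding acc_at_def accepting_simulator by auto
  also have "\<dots> \<longleftrightarrow> (\<forall>i<length x. sim_accepting Cs T Ws (expected_cell k i))"
    unfolding run_simulator[OF assms(2)] by auto
  also have "\<dots> \<longleftrightarrow> rounds * T \<le> k \<and> k < T_end \<and>
      (\<forall>(r, j)\<in>set (Ws ! (k - rounds * T)). acc_at (Cs ! r) x (drop (r * T) cs) j)"
    unfolding sim_accepting_expected_cell acc_at_iff_nth using assms(1) by auto
  finally show ?thesis .
qed

lemma accepts_before_simulator:
  assumes "x \<noteq> []" and "length cs = T_end"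
  shows "accepts_before simulator x T_end cs \<longleftrightarrow>
    (\<exists>w\<in>set Ws. \<forall>(r, j)\<in>set w. acc_at (Cs ! r) x (drop (r * T) cs) j)"
proof -
  let ?holds = "\<lambda>w. \<forall>(r, j)\<in>set w. acc_at (Cs ! r) x (drop (r * T) cs) j"
  have "accepts_before simulator x T_end cs \<longleftrightarrow> (\<exists>d<length Ws. acc_at simulator x cs (rounds * T + d))"
    unfolding accepts_before_def
  proof
    assume "\<exists>j<T_end. acc_at simulator x cs j"
    then obtain j where "j < T_end" and "acc_at simulator x cs j"
      by blast
    moreover have "rounds * T \<le> j"
      using acc_at_simulator[OF assms(1), of j] calculation assms(2) by simp
    ultimately show "\<exists>d<length Ws. acc_at simulator x cs (rounds * T + d)"
      by (intro exI[of _ "j - rounds * T"]) simp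
  qed (metis add_less_cancel_left)
  also have "\<dots> \<longleftrightarrow> (\<exists>d<length Ws. ?holds (Ws ! d))"
  proof -
    have "acc_at simulator x cs (rounds * T + d) \<longleftrightarrow> ?holds (Ws ! d)" if "d < length Ws" for d
      using acc_at_simulator[OF assms(1), of "rounds * T + d"] assms(2) that by simp
    then show ?thesis
      by blast
  qed
  also have "\<dots> \<longleftrightarrow> (\<exists>w\<in>set Ws. ?holds w)"
    by (auto simp: in_set_conv_nth) (meson nth_mem)
  finally show ?thesis .
qed

end

lemma time_bound_simulator: "time_bound simulator T_end"
  unfolding time_bound_def
proof (intro ballI allI impI)
  fix x cs k
  assume x: "x \<in> input_words simulator" and cs: "\<forall>c\<in>set cs. length c = length x"
    and k: "k \<le> length cs" and acc: "acc_at simulator x cs k"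
  have x_I: "set x \<subseteq> I"
    using x by (simp add: input_words_def inputs_simulator)
  show "\<exists>j<T_end. j \<le> k \<and> acc_at simulator x cs j"
  proof (cases "x = []")
    case True
    then show ?thesis
      using T_pos Cs_nonempty by (intro exI[of _ 0]) (simp add: acc_at_def)
  next
    case False
    then have "k < T_end"
      using acc_at_simulator[OF x_I cs[rule_format] False k] acc by simp
    with acc show ?thesis
      by blast
  qed
qed

lemma acc_prob_simulator:
  assumes x: "x \<in> input_words simulator" and "x \<noteq> []"
  shows "acc_prob simulator x = coin_prob (length x) T_end
    (\<lambda>cs. \<exists>w\<in>set Ws. \<forall>(r, j)\<in>set w. acc_at (Cs ! r) x (drop (r * T) cs) j)"
  unfolding acc_prob_eq_coin_prob[OF time_bound_simulator x]
proof (rule coin_prob_cong)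
  fix cs assume "cs \<in> coin_seqs (length x) T_end"
  then have "\<And>c. c \<in> set cs \<Longrightarrow> length c = length x" and "length cs = T_end"
    by (auto simp: coin_seqs_def)
  moreover have "set x \<subseteq> I"
    using x by (simp add: input_words_def inputs_simulator)
  ultimately show "accepts_before simulator x T_end cs \<longleftrightarrow>
      (\<exists>w\<in>set Ws. \<forall>(r, j)\<in>set w. acc_at (Cs ! r) x (drop (r * T) cs) j)"
    using accepts_before_simulator \<open>x \<noteq> []\<close> by blast
qed

end

section \<open>Union and intersection\<close>

text \<open>All ways to pick \<open>k\<close> of the rounds \<open>r, \<dots>, r + m - 1\<close> together with a time \<open>j < T\<close> in each.\<close>

fun round_choices :: "nat \<Rightarrow> nat \<Rightarrow> nat \<Rightarrow> nat \<Rightarrow> (nat \<times> nat) list list" where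
  "round_choices r T 0 k = (if k = 0 then [[]] else [])"
| "round_choices r T (Suc m) k = (if k = 0 then [[]] else
     concat (map (\<lambda>j. map ((#) (r, j)) (round_choices (Suc r) T m (k - 1))) [0..<T]) @
     round_choices (Suc r) T m k)"

lemma round_choices_bounds:
  "w \<in> set (round_choices r0 T m k) \<Longrightarrow> (r, j) \<in> set w \<Longrightarrow> r0 \<le> r \<and> r < r0 + m \<and> j < T"
proof (induction m arbitrary: r0 k w)
  case 0
  then show ?case by (simp split: if_splits)
next
  case (Suc m)
  show ?case
  proof (cases "k = 0")
    case False
    then consider j w' where "j < T" "w' \<in> set (round_choices (Suc r0) T m (k - 1))" "w = (r0, j) # w'"
      | "w \<in> set (round_choices (Suc r0) T m k)"
      using Suc.prems(1) by auto
    then show ?thesis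
    proof cases
      case 1
      then show ?thesis using Suc.IH[of w' "Suc r0" "k - 1"] Suc.prems(2) by auto
    next
      case 2
      then show ?thesis using Suc.IH[of w "Suc r0" k] Suc.prems(2) by auto
    qed
  qed (use Suc.prems in simp)
qed

lemma round_choices_iff_accept_count:
  assumes "\<And>r. r0 \<le> r \<Longrightarrow> r < r0 + m \<Longrightarrow> Cs ! r = C"
  shows "(\<exists>w\<in>set (round_choices r0 T m k). \<forall>(r, j)\<in>set w. acc_at (Cs ! r) x (drop (r * T) cs) j) \<longleftrightarrow>
    k \<le> accept_count C x T m (drop (r0 * T) cs)"
  using assms
proof (induction m arbitrary: r0 k)
  case (Suc m)
  define holds where "holds w \<longleftrightarrow> (\<forall>(r, j)\<in>set w. acc_at (Cs ! r) x (drop (r * T) cs) j)" for w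
  show ?case
  proof (cases k)
    case (Suc k')
    have IH: "(\<exists>w\<in>set (round_choices (Suc r0) T m l). holds w) \<longleftrightarrow>
        l \<le> accept_count C x T m (drop T (drop (r0 * T) cs))" for l
      using Suc.IH[of "Suc r0" l] Suc.prems unfolding holds_def by (simp add: add.commute)
    have "(\<exists>w\<in>set (round_choices r0 T (Suc m) k). holds w) \<longleftrightarrow>
        (\<exists>j<T. \<exists>w\<in>set (round_choices (Suc r0) T m k'). holds ((r0, j) # w)) \<or>
        (\<exists>w\<in>set (round_choices (Suc r0) T m k). holds w)"
    proof -
      have "set (round_choices r0 T (Suc m) k) =
          (\<Union>j\<in>{0..<T}. (#) (r0, j) ` set (round_choices (Suc r0) T m k')) \<union>
          set (round_choices (Suc r0) T m k)"
        by (simp add: Suc)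
      then show ?thesis
        by fastforce
    qed
    also have "\<dots> \<longleftrightarrow> accepts_before C x T (drop (r0 * T) cs) \<and>
        (\<exists>w\<in>set (round_choices (Suc r0) T m k'). holds w) \<or>
        (\<exists>w\<in>set (round_choices (Suc r0) T m k). holds w)"
      using Suc.prems by (auto simp: holds_def accepts_before_def)
    also have "\<dots> \<longleftrightarrow> k \<le> accept_count C x T (Suc m) (drop (r0 * T) cs)"
      unfolding IH by (auto simp: Suc)
    finally show ?thesis
      unfolding holds_def .
  qed simp
qed simp

lemma bex_set_concat_append:
  "(\<exists>w\<in>set [w1 @ w2. w1 \<leftarrow> W1, w2 \<leftarrow> W2]. \<forall>p\<in>set w. P p) \<longleftrightarrow>
    (\<exists>w\<in>set W1. \<forall>p\<in>set w. P p) \<and> (\<exists>w\<in>set W2. \<forall>p\<in>set w. P p)"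
  by auto

locale paca_pair =
  fixes C1 C2 :: paca and T :: nat
  assumes wf_C1: "wf_paca C1" and wf_C2: "wf_paca C2"
    and same_inputs: "inputs C1 = inputs C2"
    and two_sided_C1: "two_sided C1" and two_sided_C2: "two_sided C2"
    and time_bound_C1: "time_bound C1 T" and time_bound_C2: "time_bound C2 T"
    and T_pos: "0 < T"
begin

definition runs :: "paca list" where
  "runs = replicate 7 C1 @ replicate 7 C2"

definition all_states :: "nat set" where
  "all_states = states C1 \<union> states C2"

definition majority1 :: "(nat \<times> nat) list list" where
  "majority1 = round_choices 0 T 7 4"

definition majority2 :: "(nat \<times> nat) list list" where
  "majority2 = round_choices 7 T 7 4"

definition union_paca :: paca where
  "union_paca = sim_paca runs T (majority1 @ majority2) (inputs C1) all_states (Max (insert 0 all_states))"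

definition inter_paca :: paca where
  "inter_paca = sim_paca runs T [w1 @ w2. w1 \<leftarrow> majority1, w2 \<leftarrow> majority2] (inputs C1) all_states
     (Max (insert 0 all_states))"

lemma length_runs: "length runs = 14"
  by (simp add: runs_def)

lemma nth_runs: "r < 7 \<Longrightarrow> runs ! r = C1" "7 \<le> r \<Longrightarrow> r < 14 \<Longrightarrow> runs ! r = C2"
  by (simp_all add: runs_def nth_append)

lemma majority_bounds:
  "w \<in> set majority1 \<union> set majority2 \<Longrightarrow> (r, j) \<in> set w \<Longrightarrow> r < 14 \<and> j < T"
  unfolding majority1_def majority2_def using round_choices_bounds by fastforce

lemma sequential_simulation_runs:
  assumes "\<And>w r j. w \<in> set Ws \<Longrightarrow> (r, j) \<in> set w \<Longrightarrow> r < 14 \<and> j < T"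
  shows "sequential_simulation runs T Ws (inputs C1) all_states (Max (insert 0 all_states))"
proof
  have "finite all_states"
    using wf_C1 wf_C2 by (simp add: all_states_def wf_paca_def)
  then show "\<And>a. a \<in> all_states \<Longrightarrow> a \<le> Max (insert 0 all_states)"
    by simp
  show "\<And>C. C \<in> set runs \<Longrightarrow> wf_paca C"
    using wf_C1 wf_C2 by (auto simp: runs_def)
  show "\<And>C. C \<in> set runs \<Longrightarrow> inputs C1 \<subseteq> states C \<and> states C \<subseteq> all_states"
    using wf_C1 wf_C2 same_inputs by (auto simp: runs_def all_states_def wf_paca_def)
qed (use T_pos assms length_runs in \<open>auto simp: runs_def\<close>)

sublocale union: sequential_simulation runs T "majority1 @ majority2" "inputs C1" all_states
    "Max (insert 0 all_states)"
  using majority_bounds by (intro sequential_simulation_runs) auto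

sublocale inter: sequential_simulation runs T "[w1 @ w2. w1 \<leftarrow> majority1, w2 \<leftarrow> majority2]" "inputs C1"
    all_states "Max (insert 0 all_states)"
  using majority_bounds by (intro sequential_simulation_runs) fastforce

lemma input_words_C2: "input_words C2 = input_words C1"
  by (simp add: input_words_def same_inputs)

lemma acc_prob_bounds:
  assumes "C \<in> {C1, C2}" and "x \<in> input_words C1"
  shows "acc_prob C x = coin_prob (length x) T (accepts_before C x T)"
    and "0 \<le> acc_prob C x" and "acc_prob C x \<le> 1"
proof -
  have "time_bound C T" and "x \<in> input_words C"
    using assms time_bound_C1 time_bound_C2 input_words_C2 by auto
  then show eq: "acc_prob C x = coin_prob (length x) T (accepts_before C x T)"
    by (rule acc_prob_eq_coin_prob)
  show "0 \<le> acc_prob C x" and "acc_prob C x \<le> 1"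
    unfolding eq by (simp_all add: coin_prob_nonneg coin_prob_le_1)
qed

lemma coin_prob_majority:
  assumes "C \<in> {C1, C2}" and "x \<in> input_words C1"
  shows "coin_prob (length x) (7 * T) (\<lambda>cs. 4 \<le> accept_count C x T 7 cs) = binomial_tail (acc_prob C x) 7 4"
  unfolding acc_prob_bounds(1)[OF assms] by (rule coin_prob_accept_count)

lemma majority_gap_acc_prob:
  assumes "C \<in> {C1, C2}" and "x \<in> input_words C1"
  shows "majority_gap (x \<in> lang C) (binomial_tail (acc_prob C x) 7 4)"
proof -
  have "x \<in> input_words C" and "two_sided C"
    using assms two_sided_C1 two_sided_C2 input_words_C2 by auto
  then have "x \<in> lang C \<longleftrightarrow> 2/3 \<le> acc_prob C x" and "2/3 \<le> acc_prob C x \<or> acc_prob C x \<le> 1/3"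
    by (auto simp: lang_def two_sided_def)
  then show ?thesis
    using majority_gap_binomial_tail acc_prob_bounds(2,3)[OF assms] by simp
qed

lemma majority1_iff:
  "(\<exists>w\<in>set majority1. \<forall>(r, j)\<in>set w. acc_at (runs ! r) x (drop (r * T) cs) j) \<longleftrightarrow>
    4 \<le> accept_count C1 x T 7 cs"
  using round_choices_iff_accept_count[of 0 7 runs C1 T 4 x cs] nth_runs by (simp add: majority1_def)

lemma majority2_iff:
  "(\<exists>w\<in>set majority2. \<forall>(r, j)\<in>set w. acc_at (runs ! r) x (drop (r * T) cs) j) \<longleftrightarrow>
    4 \<le> accept_count C2 x T 7 (drop (7 * T) cs)"
  using round_choices_iff_accept_count[of 7 7 runs C2 T 4 x cs] nth_runs by (simp add: majority2_def)

lemma acc_prob_union_paca: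
  assumes "x \<in> input_words C1" and "x \<noteq> []"
  shows "acc_prob union_paca x =
    1 - (1 - binomial_tail (acc_prob C1 x) 7 4) * (1 - binomial_tail (acc_prob C2 x) 7 4)"
proof -
  have "x \<in> input_words union_paca"
    using assms(1) by (simp add: union_paca_def input_words_def union.inputs_simulator)
  then have "acc_prob union_paca x = coin_prob (length x) (7 * T + 7 * T + length (majority1 @ majority2))
      (\<lambda>cs. 4 \<le> accept_count C1 x T 7 cs \<or> 4 \<le> accept_count C2 x T 7 (drop (7 * T) cs))"
    using union.acc_prob_simulator[of x] assms(2)
    unfolding union_paca_def length_runs set_append bex_Un majority1_iff majority2_iff
    by (simp add: algebra_simps)
  also have "\<dots> = 1 - (1 - binomial_tail (acc_prob C1 x) 7 4) * (1 - binomial_tail (acc_prob C2 x) 7 4)"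
    using coin_prob_independent_disj[of "\<lambda>cs. 4 \<le> accept_count C1 x T 7 cs" "7 * T"
        "\<lambda>cs. 4 \<le> accept_count C2 x T 7 cs" "7 * T" "length x"]
    by (simp add: accept_count_take coin_prob_majority assms(1))
  finally show ?thesis .
qed

lemma acc_prob_inter_paca:
  assumes "x \<in> input_words C1" and "x \<noteq> []"
  shows "acc_prob inter_paca x = binomial_tail (acc_prob C1 x) 7 4 * binomial_tail (acc_prob C2 x) 7 4"
proof -
  have "x \<in> input_words inter_paca"
    using assms(1) by (simp add: inter_paca_def input_words_def inter.inputs_simulator)
  then have "acc_prob inter_paca x = coin_prob (length x)
      (7 * T + 7 * T + length [w1 @ w2. w1 \<leftarrow> majority1, w2 \<leftarrow> majority2])
      (\<lambda>cs. 4 \<le> accept_count C1 x T 7 cs \<and> 4 \<le> accept_count C2 x T 7 (drop (7 * T) cs))"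
    using inter.acc_prob_simulator[of x] assms(2)
    unfolding inter_paca_def length_runs bex_set_concat_append majority1_iff majority2_iff
    by (simp add: algebra_simps)
  also have "\<dots> = binomial_tail (acc_prob C1 x) 7 4 * binomial_tail (acc_prob C2 x) 7 4"
    using coin_prob_independent[of "\<lambda>cs. 4 \<le> accept_count C1 x T 7 cs" "7 * T"
        "\<lambda>cs. 4 \<le> accept_count C2 x T 7 cs" "7 * T" "length x"]
    by (simp add: accept_count_take coin_prob_majority assms(1))
  finally show ?thesis .
qed

lemma decides_union:
  assumes "x \<in> input_words C1"
  shows "decides (x \<in> lang C1 \<or> x \<in> lang C2) (acc_prob union_paca x)"
proof (cases "x = []")
  case True
  then show ?thesis
    using assms by (simp add: acc_prob_Nil decides_def lang_def)
next
  case False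
  then show ?thesis
    unfolding acc_prob_union_paca[OF assms False]
    by (intro majority_gap_union majority_gap_acc_prob) (simp_all add: assms)
qed

lemma decides_inter:
  assumes "x \<in> input_words C1"
  shows "decides (x \<in> lang C1 \<and> x \<in> lang C2) (acc_prob inter_paca x)"
proof (cases "x = []")
  case True
  then show ?thesis
    using assms input_words_C2 by (simp add: acc_prob_Nil decides_def lang_def)
next
  case False
  then show ?thesis
    unfolding acc_prob_inter_paca[OF assms False]
    by (intro majority_gap_inter majority_gap_acc_prob) (simp_all add: assms)
qed

lemma lang_subset_input_words: "lang C1 \<subseteq> input_words C1" "lang C2 \<subseteq> input_words C1"
  using input_words_C2 by (auto simp: lang_def)

lemma union_paca_correct:
  "wf_paca union_paca \<and> inputs union_paca = inputs C1 \<and> two_sided union_paca \<and>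
    constant_time union_paca \<and> lang union_paca = lang C1 \<union> lang C2"
proof -
  have input_words: "input_words union_paca = input_words C1"
    by (simp add: union_paca_def input_words_def union.inputs_simulator)
  then have "two_sided union_paca"
    and "lang union_paca = {x \<in> input_words C1. x \<in> lang C1 \<or> x \<in> lang C2}"
    using two_sided_lang_eqI[of union_paca, OF decides_union] by simp_all
  moreover have "constant_time union_paca"
    unfolding union_paca_def constant_time_iff_time_bound using union.time_bound_simulator ..
  ultimately show ?thesis
    using union.wf_simulator union.inputs_simulator lang_subset_input_words
    by (auto simp flip: union_paca_def)
qed

lemma inter_paca_correct:
  "wf_paca inter_paca \<and> inputs inter_paca = inputs C1 \<and> two_sided inter_paca \<and>
    constant_time inter_paca \<and> lang inter_paca = lang C1 \<inter> lang C2"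
proof -
  have input_words: "input_words inter_paca = input_words C1"
    by (simp add: inter_paca_def input_words_def inter.inputs_simulator)
  then have "two_sided inter_paca"
    and "lang inter_paca = {x \<in> input_words C1. x \<in> lang C1 \<and> x \<in> lang C2}"
    using two_sided_lang_eqI[of inter_paca, OF decides_inter] by simp_all
  moreover have "constant_time inter_paca"
    unfolding inter_paca_def constant_time_iff_time_bound using inter.time_bound_simulator ..
  ultimately show ?thesis
    using inter.wf_simulator inter.inputs_simulator lang_subset_input_words
    by (auto simp flip: inter_paca_def)
qed

end

theorem mainTheorem11:
  assumes "wf_paca C1" and "wf_paca C2"
    and "inputs C1 = inputs C2"
    and "two_sided C1" and "two_sided C2"
    and "constant_time C1" and "constant_time C2"
  shows "\<exists>Cu Ci. wf_paca Cu \<and> wf_paca Ci \<and> inputs Cu = inputs C1 \<and> inputs Ci = inputs C1 \<and>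
    two_sided Cu \<and> two_sided Ci \<and> constant_time Cu \<and> constant_time Ci \<and>
    lang Cu = lang C1 \<union> lang C2 \<and> lang Ci = lang C1 \<inter> lang C2"
proof -
  obtain T1 T2 where "time_bound C1 T1" and "time_bound C2 T2"
    using assms(6,7) by (auto simp: constant_time_iff_time_bound)
  then interpret paca_pair C1 C2 "max T1 T2 + 1"
    using assms(1-5) by unfold_locales (auto intro: time_bound_mono)
  show ?thesis
    using union_paca_correct inter_paca_correct by blast
qed

end
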